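(* Let $\Gamma$ be a finite group, $R$ a braided Hopf algebra in ${}^\Gamma_\Gamma\mathcal{YD}$, $A=R\#\Bbbk\Gamma$, and $\mathscr D\subseteq A^e$ the subalgebra generated by the elements $(r\#g)\otimes(s\#g^{-1})$ with $r,s\in R$, $g\in\Gamma$. Then $\mathscr D$ is a left $A$-submodule of $\mathcal L(A^e)$ and a right $A$-submodule of $\mathcal R(A^e)$.
   Context: $A^e=A\otimes A^{op}$. The map $\rho:A\to A^e$, $\rho(a)=a_1\otimes\mathcal S_A(a_2)$, is an algebra embedding; $\mathcal L(A^e)$ is $A^e$ with left $A$-action $a\cdot x=\rho(a)x$ (i.e. $a\cdot(x\otimes y)=a_1x\otimes y\,\mathcal S_A(a_2)$) and $\mathcal R(A^e)$ is $A^e$ with right $A$-action $x\cdot a=x\rho(a)$ (i.e. $(x\otimes y)\cdot a=xa_1\otimes\mathcal S_A(a_2)y$). $A$ is the bosonization with comultiplication $\Delta(r\#h)=\sum_{g}r^1\#gh\otimes(r^2)_g\#h$ and antipode $\mathcal S_A(r\#h)=\sum_g h^{-1}g^{-1}\mathcal S_R(r_g)$, where $R=\bigoplus_{g\in\Gamma}R_g$, $R_g=\{r:\delta(r)=g\otimes r\}$ for the coaction $\delta$, and $r_g$ is the $R_g$-component of $r$. *)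

theory Defs
  imports Complex_Main "HOL-Library.Function_Algebras"
begin

definition bilin ::
  "('k::field \<Rightarrow> 'a::ab_group_add \<Rightarrow> 'a) \<Rightarrow> ('k \<Rightarrow> 'b::ab_group_add \<Rightarrow> 'b)
   \<Rightarrow> ('k \<Rightarrow> 'c::ab_group_add \<Rightarrow> 'c) \<Rightarrow> ('a \<Rightarrow> 'b \<Rightarrow> 'c) \<Rightarrow> bool" where
  "bilin s1 s2 s3 f \<longleftrightarrow>
     (\<forall>x. Vector_Spaces.linear s2 s3 (f x)) \<and> (\<forall>y. Vector_Spaces.linear s1 s3 (\<lambda>x. f x y))"

text \<open>t : V \<times> W \<rightarrow> T is (a model of) the algebraic tensor product V \<otimes> W:
  t is bilinear, its image spans T, and for linearly independent families
  B, C the elements t b c (b in B, c in C) are pairwise distinct and linearly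
  independent.  This characterises the tensor product up to unique isomorphism.\<close>
definition is_tensor ::
  "('k::field \<Rightarrow> 'a::ab_group_add \<Rightarrow> 'a) \<Rightarrow> ('k \<Rightarrow> 'b::ab_group_add \<Rightarrow> 'b)
   \<Rightarrow> ('k \<Rightarrow> 'c::ab_group_add \<Rightarrow> 'c) \<Rightarrow> ('a \<Rightarrow> 'b \<Rightarrow> 'c) \<Rightarrow> bool" where
  "is_tensor s1 s2 s3 t \<longleftrightarrow>
     vector_space s1 \<and> vector_space s2 \<and> vector_space s3 \<and> bilin s1 s2 s3 t \<and>
     module.span s3 (case_prod t ` UNIV) = UNIV \<and>
     (\<forall>B C. \<not> module.dependent s1 B \<and> \<not> module.dependent s2 C \<longrightarrow>
        \<not> module.dependent s3 (case_prod t ` (B \<times> C)) \<and> inj_on (case_prod t) (B \<times> C))"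

text \<open>The group \<Gamma> is the type 'g with multiplication gm, unit ge, inverse gi.
  A left kG-comodule structure \<delta> : R \<rightarrow> kG \<otimes> R is written in the basis G of kG:
  \<delta>(r) = \<Sum>_g g \<otimes> co g r; thus co g r = r_g is the R_g-component of r.\<close>

definition YD_module ::
  "('g \<Rightarrow> 'g \<Rightarrow> 'g) \<Rightarrow> 'g \<Rightarrow> ('g \<Rightarrow> 'g) \<Rightarrow>
   ('k::field \<Rightarrow> 'r::ab_group_add \<Rightarrow> 'r) \<Rightarrow> ('g \<Rightarrow> 'r \<Rightarrow> 'r) \<Rightarrow> ('g \<Rightarrow> 'r \<Rightarrow> 'r) \<Rightarrow> bool" where
  "YD_module gm ge gi sR act co \<longleftrightarrow>
     vector_space sR \<and>
     \<comment> \<open>left kG-module\<close>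
     (\<forall>g. Vector_Spaces.linear sR sR (act g)) \<and>
     (\<forall>r. act ge r = r) \<and> (\<forall>g h r. act g (act h r) = act (gm g h) r) \<and>
     \<comment> \<open>left kG-comodule (coassociativity and counit written in the basis G)\<close>
     (\<forall>g. Vector_Spaces.linear sR sR (co g)) \<and>
     (\<forall>g h r. co h (co g r) = (if g = h then co g r else 0)) \<and>
     (\<forall>r. (\<Sum>g\<in>UNIV. co g r) = r) \<and>
     \<comment> \<open>Yetter-Drinfeld compatibility: \<delta>(g.r) = g r_{-1} g^{-1} \<otimes> g.r_0\<close>
     (\<forall>g h r. co (gm (gm g h) (gi g)) (act g r) = act g (co h r))"

definition braided_Hopf_YD ::
  "('g \<Rightarrow> 'g \<Rightarrow> 'g) \<Rightarrow> 'g \<Rightarrow> ('g \<Rightarrow> 'g) \<Rightarrow>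
   ('k::field \<Rightarrow> 'r::ab_group_add \<Rightarrow> 'r) \<Rightarrow> ('g \<Rightarrow> 'r \<Rightarrow> 'r) \<Rightarrow> ('g \<Rightarrow> 'r \<Rightarrow> 'r) \<Rightarrow>
   ('r \<Rightarrow> 'r \<Rightarrow> 'r) \<Rightarrow> 'r \<Rightarrow>
   ('k \<Rightarrow> 'rr::ab_group_add \<Rightarrow> 'rr) \<Rightarrow> ('r \<Rightarrow> 'r \<Rightarrow> 'rr) \<Rightarrow>
   ('k \<Rightarrow> 'rrr::ab_group_add \<Rightarrow> 'rrr) \<Rightarrow> ('rr \<Rightarrow> 'r \<Rightarrow> 'rrr) \<Rightarrow>
   ('r \<Rightarrow> 'rr) \<Rightarrow> ('r \<Rightarrow> 'k) \<Rightarrow> ('r \<Rightarrow> 'r) \<Rightarrow> bool" where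
  "braided_Hopf_YD gm ge gi sR act co m u sRR t sRRR t3 \<Delta> \<epsilon> S \<longleftrightarrow>
     group gm ge gi \<and> finite (UNIV :: 'g set) \<and>
     YD_module gm ge gi sR act co \<and>
     is_tensor sR sR sRR t \<and> is_tensor sRR sR sRRR t3 \<and>
     \<comment> \<open>associative unital algebra\<close>
     bilin sR sR sR m \<and>
     (\<forall>x y z. m (m x y) z = m x (m y z)) \<and> (\<forall>x. m u x = x \<and> m x u = x) \<and>
     \<comment> \<open>multiplication and unit are morphisms of YD-modules\<close>
     (\<forall>g x y. act g (m x y) = m (act g x) (act g y)) \<and> (\<forall>g. act g u = u) \<and>
     (\<forall>g x y. co g (m x y) = (\<Sum>h\<in>UNIV. m (co h x) (co (gm (gi h) g) y))) \<and>
     (\<forall>g. co g u = (if g = ge then u else 0)) \<and>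
     \<comment> \<open>coassociative counital coalgebra\<close>
     Vector_Spaces.linear sR sRR \<Delta> \<and> Vector_Spaces.linear sR (*) \<epsilon> \<and>
     (\<exists>L1 A2 L2.
        Vector_Spaces.linear sRR sRRR L1 \<and> (\<forall>a b. L1 (t a b) = t3 (\<Delta> a) b) \<and>
        bilin sR sRR sRRR A2 \<and> (\<forall>a b c. A2 a (t b c) = t3 (t a b) c) \<and>
        Vector_Spaces.linear sRR sRRR L2 \<and> (\<forall>a b. L2 (t a b) = A2 a (\<Delta> b)) \<and>
        (\<forall>r. L1 (\<Delta> r) = L2 (\<Delta> r))) \<and>
     (\<exists>E1 E2.
        Vector_Spaces.linear sRR sR E1 \<and> (\<forall>a b. E1 (t a b) = sR (\<epsilon> a) b) \<and>
        Vector_Spaces.linear sRR sR E2 \<and> (\<forall>a b. E2 (t a b) = sR (\<epsilon> b) a) \<and>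
        (\<forall>r. E1 (\<Delta> r) = r \<and> E2 (\<Delta> r) = r)) \<and>
     \<comment> \<open>comultiplication and counit are morphisms of YD-modules\<close>
     (\<forall>g. \<exists>Ag. Vector_Spaces.linear sRR sRR Ag \<and> (\<forall>a b. Ag (t a b) = t (act g a) (act g b)) \<and>
            (\<forall>r. \<Delta> (act g r) = Ag (\<Delta> r))) \<and>
     (\<forall>g. \<exists>Cg. Vector_Spaces.linear sRR sRR Cg \<and>
            (\<forall>a b. Cg (t a b) = (\<Sum>h\<in>UNIV. t (co h a) (co (gm (gi h) g) b))) \<and>
            (\<forall>r. \<Delta> (co g r) = Cg (\<Delta> r))) \<and>
     (\<forall>g r. \<epsilon> (act g r) = \<epsilon> r) \<and>
     (\<forall>g r. \<epsilon> (co g r) = (if g = ge then \<epsilon> r else 0)) \<and>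
     \<comment> \<open>\<Delta> and \<epsilon> are algebra maps, R \<otimes> R carrying the braided tensor product algebra
        structure (a \<otimes> b)(a' \<otimes> b') = a (b_{-1}.a') \<otimes> b_0 b'\<close>
     (\<exists>mRR. bilin sRR sRR sRR mRR \<and>
        (\<forall>a b a' b'. mRR (t a b) (t a' b') = (\<Sum>g\<in>UNIV. t (m a (act g a')) (m (co g b) b'))) \<and>
        (\<forall>x y. \<Delta> (m x y) = mRR (\<Delta> x) (\<Delta> y))) \<and>
     \<Delta> u = t u u \<and>
     (\<forall>x y. \<epsilon> (m x y) = \<epsilon> x * \<epsilon> y) \<and> \<epsilon> u = 1 \<and>
     \<comment> \<open>antipode: a morphism of YD-modules which is a convolution inverse of the identity\<close>
     Vector_Spaces.linear sR sR S \<and>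
     (\<forall>g r. S (act g r) = act g (S r)) \<and> (\<forall>g r. S (co g r) = co g (S r)) \<and>
     (\<exists>M1 M2.
        Vector_Spaces.linear sRR sR M1 \<and> (\<forall>a b. M1 (t a b) = m (S a) b) \<and>
        Vector_Spaces.linear sRR sR M2 \<and> (\<forall>a b. M2 (t a b) = m a (S b)) \<and>
        (\<forall>r. M1 (\<Delta> r) = sR (\<epsilon> r) u \<and> M2 (\<Delta> r) = sR (\<epsilon> r) u))"

text \<open>Since \<Gamma> is finite and k\<Gamma> has basis \<Gamma>, the vector space R \<otimes> k\<Gamma> is modelled by
  functions x : \<Gamma> \<rightarrow> R, with x = \<Sum>_g x(g) # g.\<close>

definition smash :: "'r::zero \<Rightarrow> 'g \<Rightarrow> ('g \<Rightarrow> 'r)" where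
  "smash r g = (\<lambda>h. if h = g then r else 0)"

definition scA :: "('k \<Rightarrow> 'r \<Rightarrow> 'r) \<Rightarrow> 'k \<Rightarrow> ('g \<Rightarrow> 'r) \<Rightarrow> ('g \<Rightarrow> 'r)" where
  "scA sR c x = (\<lambda>h. sR c (x h))"

text \<open>Smash product multiplication (r # g)(s # h) = r (g.s) # gh, extended bilinearly.\<close>
definition bos_mult ::
  "('g \<Rightarrow> 'g \<Rightarrow> 'g) \<Rightarrow> ('g \<Rightarrow> 'r \<Rightarrow> 'r) \<Rightarrow> ('r::comm_monoid_add \<Rightarrow> 'r \<Rightarrow> 'r)
   \<Rightarrow> ('g \<Rightarrow> 'r) \<Rightarrow> ('g \<Rightarrow> 'r) \<Rightarrow> ('g \<Rightarrow> 'r)" where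
  "bos_mult gm act m x y = (\<lambda>k. \<Sum>(g, h) \<in> {(g, h). gm g h = k}. m (x g) (act g (y h)))"

definition bos_antipode ::
  "('g \<Rightarrow> 'g \<Rightarrow> 'g) \<Rightarrow> 'g \<Rightarrow> ('g \<Rightarrow> 'g) \<Rightarrow> ('g \<Rightarrow> 'r \<Rightarrow> 'r) \<Rightarrow> ('g \<Rightarrow> 'r \<Rightarrow> 'r)
   \<Rightarrow> ('r::comm_monoid_add \<Rightarrow> 'r \<Rightarrow> 'r) \<Rightarrow> 'r \<Rightarrow> ('r \<Rightarrow> 'r) \<Rightarrow> ('g \<Rightarrow> 'r) \<Rightarrow> ('g \<Rightarrow> 'r)" where
  "bos_antipode gm ge gi act co m u S x =
     (\<Sum>h\<in>UNIV. \<Sum>g\<in>UNIV.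
        bos_mult gm act m (smash u (gm (gi h) (gi g))) (smash (S (co g (x h))) ge))"

inductive_set gen_subalg ::
  "('k \<Rightarrow> 'e::ab_group_add \<Rightarrow> 'e) \<Rightarrow> ('e \<Rightarrow> 'e \<Rightarrow> 'e) \<Rightarrow> 'e \<Rightarrow> 'e set \<Rightarrow> 'e set"
  for sc :: "'k \<Rightarrow> 'e \<Rightarrow> 'e" and mul :: "'e \<Rightarrow> 'e \<Rightarrow> 'e" and one :: 'e and G :: "'e set" where
  gen_one: "one \<in> gen_subalg sc mul one G"
| gen_gen: "x \<in> G \<Longrightarrow> x \<in> gen_subalg sc mul one G"
| gen_zero: "0 \<in> gen_subalg sc mul one G"
| gen_add: "x \<in> gen_subalg sc mul one G \<Longrightarrow> y \<in> gen_subalg sc mul one G \<Longrightarrow> x + y \<in> gen_subalg sc mul one G"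
| gen_scale: "x \<in> gen_subalg sc mul one G \<Longrightarrow> sc c x \<in> gen_subalg sc mul one G"
| gen_mul: "x \<in> gen_subalg sc mul one G \<Longrightarrow> y \<in> gen_subalg sc mul one G \<Longrightarrow> mul x y \<in> gen_subalg sc mul one G"

end

theory Submission
  imports Defs
begin

text \<open>
  Let A = R # k\<Gamma> and \<rho>(a) = a_1 \<otimes> S_A(a_2).  The proof rests on one computation:
  for r \<in> R and h \<in> \<Gamma>, writing \<Delta>(r) = r^1 \<otimes> r^2,
    \<rho>(r # h) = \<Sum>_g (r^1 # gh) \<otimes> S_A((r^2)_g # h)
             = \<Sum>_g (r^1 # gh) \<otimes> ((gh)^{-1}.S((r^2)_g) # (gh)^{-1}),
  because S_A sends a homogeneous element s # h of degree g to
  (gh)^{-1}.S(s) # (gh)^{-1}.  Every summand is one of the generators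
  (r # k) \<otimes> (s # k^{-1}) of \<D>, so \<rho>(A) \<subseteq> \<D>; since \<D> is a subalgebra of A^e,
  left and right multiplication by \<rho>(a) preserve \<D>, which is the theorem.
\<close>

lemma linear_zero: "Vector_Spaces.linear s1 s2 f \<Longrightarrow> f 0 = 0"
  by (simp add: Vector_Spaces.linear_iff_module_hom module_hom.zero)

lemma linear_add: "Vector_Spaces.linear s1 s2 f \<Longrightarrow> f (x + y) = f x + f y"
  by (simp add: Vector_Spaces.linear_iff_module_hom module_hom.add)

lemma linear_scale: "Vector_Spaces.linear s1 s2 f \<Longrightarrow> f (s1 c x) = s2 c (f x)"
  by (simp add: Vector_Spaces.linear_iff_module_hom module_hom.scale)

lemma linear_sum: "Vector_Spaces.linear s1 s2 f \<Longrightarrow> f (sum g A) = (\<Sum>a\<in>A. f (g a))"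
  by (simp add: Vector_Spaces.linear_iff_module_hom module_hom.sum)

lemma gen_subalg_sum:
  assumes "finite A" "\<And>x. x \<in> A \<Longrightarrow> f x \<in> gen_subalg sc mul one G"
  shows "sum f A \<in> gen_subalg sc mul one G"
  using assms by (induction A rule: finite_induct) (auto intro: gen_subalg.intros)

lemma linear_into_gen_subalg:
  assumes lin: "Vector_Spaces.linear s sc f"
    and span: "module.span s B = UNIV"
    and on_B: "\<And>b. b \<in> B \<Longrightarrow> f b \<in> gen_subalg sc mul one G"
  shows "f v \<in> gen_subalg sc mul one G"
proof -
  have "module s"
    using lin by (simp add: Vector_Spaces.linear_def vector_space_def module_def)
  moreover have "v \<in> module.span s B" using span by simp
  ultimately show ?thesis
  proof (rule module.span_induct_alt)
    show "f 0 \<in> gen_subalg sc mul one G"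
      by (simp add: linear_zero[OF lin] gen_subalg.gen_zero)
  next
    fix c x y
    assume "x \<in> B" and "f y \<in> gen_subalg sc mul one G"
    then show "f (s c x + y) \<in> gen_subalg sc mul one G"
      by (simp add: linear_add[OF lin] linear_scale[OF lin] on_B gen_subalg.intros)
  qed
qed

lemma smash_apply: "smash r g h = (if h = g then r else 0)"
  by (simp add: smash_def)

lemma smash_zero [simp]: "smash 0 g = 0"
  by (simp add: smash_def fun_eq_iff)

lemma bos_mult_smash:
  fixes m :: "'r::comm_monoid_add \<Rightarrow> 'r \<Rightarrow> 'r"
  assumes fin: "finite (UNIV :: 'g set)"
    and m0: "\<And>x. m x 0 = 0" and m0': "\<And>y. m 0 y = 0" and act0: "\<And>g. act g 0 = 0"
  shows "bos_mult gm act m (smash a (g::'g)) (smash b h) = smash (m a (act g b)) (gm g h)"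
proof (rule ext)
  fix k
  have fin_k: "finite {(g', h'). gm g' h' = k}"
    by (rule finite_subset[OF _ finite_cartesian_product[OF fin fin]]) auto
  have "bos_mult gm act m (smash a g) (smash b h) k =
        (\<Sum>p \<in> {(g', h'). gm g' h' = k}. if p = (g, h) then m a (act g b) else 0)"
    unfolding bos_mult_def
    by (rule sum.cong) (auto simp: smash_def m0 m0' act0 split: if_splits)
  also have "\<dots> = smash (m a (act g b)) (gm g h) k"
    using fin_k by (simp add: sum.delta' smash_def)
  finally show "bos_mult gm act m (smash a g) (smash b h) k = smash (m a (act g b)) (gm g h) k" .
qed

context
  fixes gm :: "'g \<Rightarrow> 'g \<Rightarrow> 'g" and ge :: 'g and gi :: "'g \<Rightarrow> 'g"
    and sR :: "'k::field \<Rightarrow> 'r::ab_group_add \<Rightarrow> 'r"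
    and act :: "'g \<Rightarrow> 'r \<Rightarrow> 'r" and co :: "'g \<Rightarrow> 'r \<Rightarrow> 'r"
    and m :: "'r \<Rightarrow> 'r \<Rightarrow> 'r" and u :: 'r
    and sRR :: "'k \<Rightarrow> 'rr::ab_group_add \<Rightarrow> 'rr" and t :: "'r \<Rightarrow> 'r \<Rightarrow> 'rr"
    and sRRR :: "'k \<Rightarrow> 'rrr::ab_group_add \<Rightarrow> 'rrr" and t3 :: "'rr \<Rightarrow> 'r \<Rightarrow> 'rrr"
    and \<Delta> :: "'r \<Rightarrow> 'rr" and \<epsilon> :: "'r \<Rightarrow> 'k" and S :: "'r \<Rightarrow> 'r"
  assumes R: "braided_Hopf_YD gm ge gi sR act co m u sRR t sRRR t3 \<Delta> \<epsilon> S"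
begin

lemma finite_group: "finite (UNIV :: 'g set)" "group gm ge gi"
  using R unfolding braided_Hopf_YD_def by blast+

lemma zero_preserving: "m x 0 = 0" "m 0 y = 0" "act g 0 = 0" "co g 0 = 0" "S 0 = 0"
proof -
  have bil: "bilin sR sR sR m" and linS: "Vector_Spaces.linear sR sR S"
    and YD: "YD_module gm ge gi sR act co"
    using R unfolding braided_Hopf_YD_def by blast+
  have "Vector_Spaces.linear sR sR (m x)" "Vector_Spaces.linear sR sR (\<lambda>x. m x y)"
    using bil unfolding bilin_def by blast+
  from this[THEN linear_zero] show "m x 0 = 0" "m 0 y = 0" by simp_all
  show "act g 0 = 0" "co g 0 = 0"
    using YD unfolding YD_module_def by (blast intro: linear_zero)+
  show "S 0 = 0" using linS by (rule linear_zero)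
qed

lemma unit_left: "m u x = x"
proof -
  have "\<forall>x. m u x = x \<and> m x u = x"
    using R unfolding braided_Hopf_YD_def by (elim conjE) assumption
  then show ?thesis by blast
qed

lemma component_idem: "co h (co g r) = (if g = h then co g r else 0)"
proof -
  have "YD_module gm ge gi sR act co" using R unfolding braided_Hopf_YD_def by blast
  then show ?thesis unfolding YD_module_def by blast
qed

lemma simple_tensors_span: "module.span sRR (case_prod t ` UNIV) = UNIV"
proof -
  have "is_tensor sR sR sRR t" using R unfolding braided_Hopf_YD_def by blast
  then show ?thesis unfolding is_tensor_def by blast
qed

text \<open>The antipode of A on a homogeneous element: for s \<in> R_g,
  S_A(s # h) = (gh)^{-1}.S(s) # (gh)^{-1}.  Only the summand for the degree g of s
  survives in the definition of S_A.\<close>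
lemma bos_antipode_homogeneous:
  "bos_antipode gm ge gi act co m u S (smash (co g b) h) =
   smash (act (gi (gm g h)) (S (co g b))) (gi (gm g h))"
proof -
  interpret \<Gamma>: group gm ge gi by (rule finite_group(2))
  note mult_smash = bos_mult_smash[where m = m and act = act,
      OF finite_group(1) zero_preserving(1,2,3)]
  define k where "k = gi (gm g h)"
  have k: "k = gm (gi h) (gi g)" unfolding k_def by (rule \<Gamma>.inverse_distrib_swap)
  have "bos_antipode gm ge gi act co m u S (smash (co g b) h) =
     (\<Sum>h'\<in>UNIV. if h' = h then (\<Sum>g'\<in>UNIV. if g' = g then
         smash (act k (S (co g b))) k else 0) else 0)"
    unfolding bos_antipode_def k
    by (intro sum.cong refl)
       (auto intro: sum.cong simp: mult_smash unit_left component_idem zero_preserving smash_apply)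
  also have "\<dots> = smash (act k (S (co g b))) k"
    using finite_group(1) by (simp add: sum.delta')
  finally show ?thesis unfolding k_def .
qed

end

definition diag_subalg ::
  "('k \<Rightarrow> 'e::ab_group_add \<Rightarrow> 'e) \<Rightarrow> ('e \<Rightarrow> 'e \<Rightarrow> 'e) \<Rightarrow> (('g \<Rightarrow> 'r) \<Rightarrow> ('g \<Rightarrow> 'r) \<Rightarrow> 'e)
   \<Rightarrow> ('g \<Rightarrow> 'g) \<Rightarrow> 'g \<Rightarrow> 'r::zero \<Rightarrow> 'e set" where
  "diag_subalg sE mE tE gi ge u =
     gen_subalg sE mE (tE (smash u ge) (smash u ge))
       {tE (smash r g) (smash s (gi g)) | r s g. True}"

text \<open>On a simple tensor r \<otimes> b in the h-th summand of
  \<Delta>_A, \<rho> produces \<Sum>_g (r # gh) \<otimes> ((gh)^{-1}.S(b_g) # (gh)^{-1}), a sum of generators;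
  linearity of id \<otimes> S_A and of the maps DA h extends this to all of A.\<close>
lemma rho_in_diag_subalg:
  fixes sE :: "'k::field \<Rightarrow> 'e::ab_group_add \<Rightarrow> 'e"
    and tE :: "('g \<Rightarrow> 'r::ab_group_add) \<Rightarrow> ('g \<Rightarrow> 'r) \<Rightarrow> 'e"
    and DA :: "'g \<Rightarrow> 'rr::ab_group_add \<Rightarrow> 'e" and IS :: "'e \<Rightarrow> 'e"
  assumes R: "braided_Hopf_YD gm ge gi sR act co m u sRR t sRRR t3 \<Delta> \<epsilon> S"
    and DA_lin: "\<And>h. Vector_Spaces.linear sRR sE (DA h)"
    and DA_t: "\<And>h a b. DA h (t a b) = (\<Sum>g\<in>UNIV. tE (smash a (gm g h)) (smash (co g b) h))"
    and IS_lin: "Vector_Spaces.linear sE sE IS"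
    and IS_t: "\<And>x y. IS (tE x y) = tE x (bos_antipode gm ge gi act co m u S y)"
  shows "IS (\<Sum>h\<in>UNIV. DA h (\<Delta> (x h))) \<in> diag_subalg sE mE tE gi ge u"
proof -
  note fin = finite_group(1)[OF R]
  have on_simple_tensor: "IS (DA h (t a b)) \<in> diag_subalg sE mE tE gi ge u" for h a b
  proof -
    have "IS (DA h (t a b)) = (\<Sum>g\<in>UNIV. tE (smash a (gm g h))
            (smash (act (gi (gm g h)) (S (co g b))) (gi (gm g h))))"
      by (simp add: DA_t linear_sum[OF IS_lin] IS_t bos_antipode_homogeneous[OF R])
    also have "\<dots> \<in> diag_subalg sE mE tE gi ge u"
      unfolding diag_subalg_def
      using fin by (intro gen_subalg_sum gen_subalg.gen_gen) blast+
    finally show ?thesis .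
  qed
  have "(IS \<circ> DA h) v \<in> diag_subalg sE mE tE gi ge u" for h v
    unfolding diag_subalg_def
  proof (rule linear_into_gen_subalg[where f = "IS \<circ> DA h"])
    show "Vector_Spaces.linear sRR sE (IS \<circ> DA h)"
      using DA_lin IS_lin by (rule Vector_Spaces.linear_compose)
    show "module.span sRR (case_prod t ` UNIV) = UNIV" by (rule simple_tensors_span[OF R])
  qed (use on_simple_tensor in \<open>auto simp: diag_subalg_def\<close>)
  then show ?thesis
    unfolding linear_sum[OF IS_lin] diag_subalg_def using fin by (intro gen_subalg_sum) auto
qed

theorem mainTheorem10:
  fixes gm :: "'g \<Rightarrow> 'g \<Rightarrow> 'g" and ge :: 'g and gi :: "'g \<Rightarrow> 'g"
    and sR :: "'k::field \<Rightarrow> 'r::ab_group_add \<Rightarrow> 'r"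
    and act :: "'g \<Rightarrow> 'r \<Rightarrow> 'r" and co :: "'g \<Rightarrow> 'r \<Rightarrow> 'r"
    and m :: "'r \<Rightarrow> 'r \<Rightarrow> 'r" and u :: 'r
    and sRR :: "'k \<Rightarrow> 'rr::ab_group_add \<Rightarrow> 'rr" and t :: "'r \<Rightarrow> 'r \<Rightarrow> 'rr"
    and sRRR :: "'k \<Rightarrow> 'rrr::ab_group_add \<Rightarrow> 'rrr" and t3 :: "'rr \<Rightarrow> 'r \<Rightarrow> 'rrr"
    and \<Delta> :: "'r \<Rightarrow> 'rr" and \<epsilon> :: "'r \<Rightarrow> 'k" and S :: "'r \<Rightarrow> 'r"
    and sE :: "'k \<Rightarrow> 'e::ab_group_add \<Rightarrow> 'e" and tE :: "('g \<Rightarrow> 'r) \<Rightarrow> ('g \<Rightarrow> 'r) \<Rightarrow> 'e"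
    and DA :: "'g \<Rightarrow> 'rr \<Rightarrow> 'e" and IS :: "'e \<Rightarrow> 'e" and mE :: "'e \<Rightarrow> 'e \<Rightarrow> 'e"
  assumes R: "braided_Hopf_YD gm ge gi sR act co m u sRR t sRRR t3 \<Delta> \<epsilon> S"
    \<comment> \<open>A \<otimes> A (= A^e as a vector space)\<close>
    and tensE: "is_tensor (scA sR) (scA sR) sE tE"
    \<comment> \<open>the linear maps R \<otimes> R \<rightarrow> A \<otimes> A, a \<otimes> b \<mapsto> \<Sum>_g (a # gh) \<otimes> (b_g # h), used to define \<Delta>_A(r # h)\<close>
    and DA_lin: "\<And>h. Vector_Spaces.linear sRR sE (DA h)"
    and DA_t: "\<And>h a b. DA h (t a b) = (\<Sum>g\<in>UNIV. tE (smash a (gm g h)) (smash (co g b) h))"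
    \<comment> \<open>id \<otimes> S_A on A \<otimes> A\<close>
    and IS_lin: "Vector_Spaces.linear sE sE IS"
    and IS_t: "\<And>x y. IS (tE x y) = tE x (bos_antipode gm ge gi act co m u S y)"
    \<comment> \<open>multiplication of A^e = A \<otimes> A^op\<close>
    and mE_bilin: "bilin sE sE sE mE"
    and mE_t: "\<And>x y x' y'. mE (tE x y) (tE x' y') =
                  tE (bos_mult gm act m x x') (bos_mult gm act m y' y)"
  shows
    "let \<Delta>A = (\<lambda>x. \<Sum>h\<in>UNIV. DA h (\<Delta> (x h)));
         \<rho> = (\<lambda>x. IS (\<Delta>A x));
         \<D> = gen_subalg sE mE (tE (smash u ge) (smash u ge))
               {tE (smash r g) (smash s (gi g)) | r s g. True}
     in (\<forall>a d. d \<in> \<D> \<longrightarrow> mE (\<rho> a) d \<in> \<D>) \<and> (\<forall>a d. d \<in> \<D> \<longrightarrow> mE d (\<rho> a) \<in> \<D>)"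
proof -
  have "IS (\<Sum>h\<in>UNIV. DA h (\<Delta> (a h))) \<in> diag_subalg sE mE tE gi ge u" for a
    by (rule rho_in_diag_subalg[OF R DA_lin DA_t IS_lin IS_t])
  \<comment> \<open>\<D> is a subalgebra, so it absorbs multiplication by elements of \<rho>(A) \<subseteq> \<D>\<close>
  then show ?thesis
    unfolding Let_def diag_subalg_def by (blast intro: gen_subalg.gen_mul)
qed

end
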